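(* Let $\Sigma=(\mathbf{x},\mathbf{F})$ be an LP seed of rank $n\ge2$ satisfying Condition 1.2. Then $$R[x_1,x_2^{\pm1},\dots,x_n^{\pm1}]\cap R[x_1^{\pm1},x_2,x'_2,\dots,x_n,x'_n]=R[x_1,x_2,x'_2,\dots,x_n,x'_n].$$
   Context: $R$ is a unique factorization domain containing $\mathbb{Z}$ and $\mathcal{F}$ is the field of rational functions in $n$ variables over $\mathrm{Frac}(R)$; all rings are subrings of $\mathcal{F}$. An LP seed of rank $n$ is a pair $(\mathbf{x},\mathbf{F})$ where $\mathbf{x}=\{x_1,\dots,x_n\}$ is a transcendence basis of $\mathcal{F}$ over $\mathrm{Frac}(R)$ and $\mathbf{F}=\{F_1,\dots,F_n\}$ are irreducible polynomials in $R[x_1,\dots,x_n]$ with $x_j\nmid F_i$ for all $i,j$ and $F_i$ not involving $x_i$. The exchange Laurent polynomial is $\hat F_j=F_j/\prod_{k\neq j}x_k^{a_k}$, with $a_k\in\mathbb{Z}_{\ge0}$ maximal such that $F_k^{a_k}$ divides $F_j|_{x_k\leftarrow F_k/x'_k}$ in $R[x_1,\dots,x_{k-1},(x'_k)^{-1},x_{k+1},\dots,x_n]$. Set $x'_j=\hat F_j/x_j$. Lexicographic order on $\mathbb{Z}^n$: $\mathbf{a}\prec\mathbf{a}'$ if the first nonzero entry of $\mathbf{a}'-\mathbf{a}$ is positive; the lexicographically first monomial of a polynomial is its term with $\prec$-smallest exponent vector. Condition 1.2: for every $k\in[1,n]$, with $M_k$ the lexicographically first monomial of $F_k$: (i) $\hat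 F_k=F_k$; (ii) $M_k=x_{k+1}^{v_{k+1,k}}\cdots x_n^{v_{n,k}}$ (coefficient $1$) with $v_{\cdot,k}\in\mathbb{Z}_{\ge0}$ for $k\in[1,n-1]$, and $M_n=1$; (iii) if $k\ne1$ and $F_k$ involves $x_1$, then every monomial of $F_k-M_k$ is divisible by $x_1$; (iv) if $k\notin\{1,2\}$, $F_k$ does not involve $x_1$, and there is $i\in[2,k-1]$ such that $x_k$ divides $M_i$, then every monomial of $F_k-M_k$ is divisible by $x_i$. *)

theory Defs
  imports "HOL-Library.Poly_Mapping" "HOL-Computational_Algebra.Factorial_Ring"
begin

text \<open>Laurent polynomials in the variables x_1, x_2, ... over the coefficient ring 'a.
  A monomial is an exponent vector  exponent vector; variable i has exponent Poly_Mapping.lookup m i.\<close>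
type_synonym 'a lpoly = "(nat \<Rightarrow>\<^sub>0 int) \<Rightarrow>\<^sub>0 'a"

definition const :: "'a::zero \<Rightarrow> 'a lpoly" where
  "const c = Poly_Mapping.single 0 c"

definition monom :: "(nat \<Rightarrow>\<^sub>0 int) \<Rightarrow> 'a::{zero,one} lpoly" where
  "monom m = Poly_Mapping.single m 1"

definition X :: "nat \<Rightarrow> 'a::{zero,one} lpoly" where
  "X i = monom (Poly_Mapping.single i 1)"

definition Xinv :: "nat \<Rightarrow> 'a::{zero,one} lpoly" where
  "Xinv i = monom (Poly_Mapping.single i (-1))"

definition in_vars :: "nat \<Rightarrow> (nat \<Rightarrow>\<^sub>0 int) \<Rightarrow> bool" where
  "in_vars n m \<longleftrightarrow> Poly_Mapping.keys m \<subseteq> {1..n}"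

definition polyring :: "nat \<Rightarrow> 'a::zero lpoly set" where
  "polyring n = {P. \<forall>m\<in>Poly_Mapping.keys P. in_vars n m \<and> (\<forall>i. Poly_Mapping.lookup m i \<ge> 0)}"

text \<open>The ring R[x_1,..,x_{k-1},(x'_k)^{-1},x_{k+1},..,x_n]; the variable x'_k
  is represented at position k.\<close>
definition subst_ring :: "nat \<Rightarrow> nat \<Rightarrow> 'a::zero lpoly set" where
  "subst_ring n k = {P. \<forall>m\<in>Poly_Mapping.keys P. in_vars n m \<and> (\<forall>i. i \<noteq> k \<longrightarrow> Poly_Mapping.lookup m i \<ge> 0)
                         \<and> Poly_Mapping.lookup m k \<le> 0}"

text \<open>P |_{x_k \<leftarrow> G / x'_k} for a polynomial P (x'_k at position k)\<close>
definition subst :: "nat \<Rightarrow> 'a::comm_ring_1 lpoly \<Rightarrow> 'a lpoly \<Rightarrow> 'a lpoly" where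
  "subst k G P = (\<Sum>m\<in>Poly_Mapping.keys P.
      Poly_Mapping.single (Poly_Mapping.update k (- Poly_Mapping.lookup m k) m) (Poly_Mapping.lookup P m)
        * G ^ nat (Poly_Mapping.lookup m k))"

definition dvd_in :: "'a::times set \<Rightarrow> 'a \<Rightarrow> 'a \<Rightarrow> bool" where
  "dvd_in S a b \<longleftrightarrow> (\<exists>c\<in>S. b = a * c)"

definition unit_in :: "'a::{times,one} set \<Rightarrow> 'a \<Rightarrow> bool" where
  "unit_in S a \<longleftrightarrow> (\<exists>c\<in>S. a * c = 1)"

definition irreducible_in :: "'a::{comm_monoid_mult,zero} set \<Rightarrow> 'a \<Rightarrow> bool" where
  "irreducible_in S p \<longleftrightarrow> p \<in> S \<and> p \<noteq> 0 \<and> \<not> unit_in S p \<and>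
     (\<forall>a\<in>S. \<forall>b\<in>S. p = a * b \<longrightarrow> unit_in S a \<or> unit_in S b)"

definition involves :: "'a::zero lpoly \<Rightarrow> nat \<Rightarrow> bool" where
  "involves P i \<longleftrightarrow> (\<exists>m\<in>Poly_Mapping.keys P. Poly_Mapping.lookup m i \<noteq> 0)"

definition exch_exp :: "nat \<Rightarrow> (nat \<Rightarrow> 'a::comm_ring_1 lpoly) \<Rightarrow> nat \<Rightarrow> nat \<Rightarrow> nat" where
  "exch_exp n F j k = (GREATEST a. dvd_in (subst_ring n k) (F k ^ a) (subst k (F k) (F j)))"

definition hatF :: "nat \<Rightarrow> (nat \<Rightarrow> 'a::comm_ring_1 lpoly) \<Rightarrow> nat \<Rightarrow> 'a lpoly" where
  "hatF n F j = F j * monom (\<Sum>k\<in>{1..n} - {j}. Poly_Mapping.single k (- int (exch_exp n F j k)))"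

definition xprime :: "nat \<Rightarrow> (nat \<Rightarrow> 'a::comm_ring_1 lpoly) \<Rightarrow> nat \<Rightarrow> 'a lpoly" where
  "xprime n F j = hatF n F j * Xinv j"

definition LP_seed :: "nat \<Rightarrow> (nat \<Rightarrow> 'a::comm_ring_1 lpoly) \<Rightarrow> bool" where
  "LP_seed n F \<longleftrightarrow> (\<forall>i\<in>{1..n}. irreducible_in (polyring n) (F i) \<and> \<not> involves (F i) i \<and>
      (\<forall>j\<in>{1..n}. \<not> dvd_in (polyring n) (X j) (F i)))"

definition lex_less :: "nat \<Rightarrow> (nat \<Rightarrow>\<^sub>0 int) \<Rightarrow> (nat \<Rightarrow>\<^sub>0 int) \<Rightarrow> bool" where
  "lex_less n a b \<longleftrightarrow> (\<exists>i\<in>{1..n}. (\<forall>j\<in>{1..<i}. Poly_Mapping.lookup a j = Poly_Mapping.lookup b j) \<and> Poly_Mapping.lookup a i < Poly_Mapping.lookup b i)"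

definition lex_first_exp :: "nat \<Rightarrow> 'a::zero lpoly \<Rightarrow> nat \<Rightarrow>\<^sub>0 int" where
  "lex_first_exp n P = (THE m. m \<in> Poly_Mapping.keys P \<and> (\<forall>m'\<in>Poly_Mapping.keys P. m' \<noteq> m \<longrightarrow> lex_less n m m'))"

definition lex_first :: "nat \<Rightarrow> 'a::zero lpoly \<Rightarrow> 'a lpoly" where
  "lex_first n P = Poly_Mapping.single (lex_first_exp n P) (Poly_Mapping.lookup P (lex_first_exp n P))"

definition condition_1_2 :: "nat \<Rightarrow> (nat \<Rightarrow> 'a::comm_ring_1 lpoly) \<Rightarrow> bool" where
  "condition_1_2 n F \<longleftrightarrow> (\<forall>k\<in>{1..n}.
     hatF n F k = F k \<and>
     Poly_Mapping.lookup (F k) (lex_first_exp n (F k)) = 1 \<and>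
     (\<forall>i\<in>{1..k}. Poly_Mapping.lookup (lex_first_exp n (F k)) i = 0) \<and>
     (k \<noteq> 1 \<and> involves (F k) 1 \<longrightarrow>
        (\<forall>m\<in>Poly_Mapping.keys (F k - lex_first n (F k)). Poly_Mapping.lookup m 1 \<ge> 1)) \<and>
     (k \<notin> {1,2} \<and> \<not> involves (F k) 1 \<longrightarrow>
        (\<forall>i\<in>{2..k-1}. Poly_Mapping.lookup (lex_first_exp n (F i)) k \<ge> 1 \<longrightarrow>
           (\<forall>m\<in>Poly_Mapping.keys (F k - lex_first n (F k)). Poly_Mapping.lookup m i \<ge> 1))))"

inductive_set ring_gen :: "'a::comm_ring_1 lpoly set \<Rightarrow> 'a lpoly set" for G where
  const: "const c \<in> ring_gen G"
| gen: "g \<in> G \<Longrightarrow> g \<in> ring_gen G"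
| add: "p \<in> ring_gen G \<Longrightarrow> q \<in> ring_gen G \<Longrightarrow> p + q \<in> ring_gen G"
| mult: "p \<in> ring_gen G \<Longrightarrow> q \<in> ring_gen G \<Longrightarrow> p * q \<in> ring_gen G"
| neg: "p \<in> ring_gen G \<Longrightarrow> - p \<in> ring_gen G"

end

theory Submission
  imports Defs
begin

text \<open>Let \<open>C = R[x\<^sub>1, x\<^sub>2, x'\<^sub>2, \<dots>, x\<^sub>n, x'\<^sub>n]\<close>. An element \<open>y\<close> of the left-hand side
  has no negative powers of \<open>x\<^sub>1\<close>, and \<open>x\<^sub>1\<^sup>N y \<in> C\<close> for some \<open>N\<close>; so it suffices to cancel
  one factor \<open>x\<^sub>1\<close> at a time: if \<open>z \<in> C\<close> and every monomial of \<open>z\<close> is divisible by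
  \<open>x\<^sub>1\<close>, then \<open>z / x\<^sub>1 \<in> C\<close>.
  Using \<open>x\<^sub>i x'\<^sub>i = F\<^sub>i\<close>, every element of \<open>C\<close> can be written as \<open>x\<^sub>1 c + w\<close> with \<open>c \<in> C\<close>
  and \<open>w\<close> an \<open>R\<close>-combination of reduced monomials \<open>\<Prod> x\<^sub>i\<^bsup>c\<^sub>i\<^esup> x'\<^sub>i\<^bsup>d\<^sub>i\<^esup>\<close> with \<open>c\<^sub>i d\<^sub>i = 0\<close>.
  Since the lexicographically first monomial of \<open>F\<^sub>i\<close> only involves \<open>x\<^sub>i\<^sub>+\<^sub>1, \<dots>, x\<^sub>n\<close>, the
  lexicographically first monomial of a reduced monomial does not involve \<open>x\<^sub>1\<close> and determines
  \<open>(c, d)\<close>. Hence a nonzero \<open>w\<close> has a monomial free of \<open>x\<^sub>1\<close>, and for \<open>z\<close> as above \<open>z = x\<^sub>1 c\<close>.\<close>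

section \<open>Laurent polynomials and the rings they generate\<close>

lemma poly_mapping_sum_singles:
  "(p :: 'b \<Rightarrow>\<^sub>0 'c::comm_monoid_add) =
     (\<Sum>m\<in>Poly_Mapping.keys p. Poly_Mapping.single m (Poly_Mapping.lookup p m))"
  by (rule poly_mapping_eqI)
     (auto simp: lookup_sum lookup_single when_def in_keys_iff sum.delta' split: if_splits)

lemma lookup_times_keys:
  "Poly_Mapping.lookup ((p :: 'b::monoid_add \<Rightarrow>\<^sub>0 'c::comm_semiring_1) * q) k =
    (\<Sum>a\<in>Poly_Mapping.keys p. \<Sum>b\<in>Poly_Mapping.keys q.
       if a + b = k then Poly_Mapping.lookup p a * Poly_Mapping.lookup q b else 0)"
proof -
  have "p * q = (\<Sum>a\<in>Poly_Mapping.keys p. \<Sum>b\<in>Poly_Mapping.keys q.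
      Poly_Mapping.single (a + b) (Poly_Mapping.lookup p a * Poly_Mapping.lookup q b))"
    by (subst (1 2) poly_mapping_sum_singles)
       (simp add: sum_distrib_left sum_distrib_right mult_single sum.swap[where A = "Poly_Mapping.keys q"])
  then show ?thesis
    by (simp add: lookup_sum lookup_single when_def)
qed

lemma lookup_const_times:
  "Poly_Mapping.lookup (const c * (p :: 'a::comm_ring_1 lpoly)) k = c * Poly_Mapping.lookup p k"
  unfolding const_def lookup_times_keys
  by (cases "k \<in> Poly_Mapping.keys p") (auto simp: sum.If_cases in_keys_iff Int_absorb1)

lemma const_one [simp]: "const 1 = (1 :: 'a::comm_ring_1 lpoly)"
  by (simp add: const_def)

lemma const_zero [simp]: "const 0 = (0 :: 'a::comm_ring_1 lpoly)"
  by (simp add: const_def)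

lemma const_add: "const (a + b) = (const a + const b :: 'a::comm_ring_1 lpoly)"
  by (simp add: const_def single_add)

lemma const_uminus: "const (- a) = (- const a :: 'a::comm_ring_1 lpoly)"
  by (simp add: const_def single_uminus)

lemma const_mult: "const (a * b) = (const a * const b :: 'a::comm_ring_1 lpoly)"
  by (simp add: const_def mult_single)

lemma single_eq_const_times_monom:
  "Poly_Mapping.single m a = (const a * monom m :: 'a::comm_ring_1 lpoly)"
  by (simp add: const_def monom_def mult_single)

lemma monom_zero [simp]: "monom 0 = (1 :: 'a::comm_ring_1 lpoly)"
  by (simp add: monom_def)

lemma monom_add: "monom (a + b) = (monom a * monom b :: 'a::comm_ring_1 lpoly)"
  by (simp add: monom_def mult_single)

lemma monom_sum: "monom (\<Sum>i\<in>I. f i) = (\<Prod>i\<in>I. monom (f i) :: 'a::comm_ring_1 lpoly)"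
  by (induction I rule: infinite_finite_induct) (simp_all add: monom_add)

lemma X_power: "X i ^ k = (monom (Poly_Mapping.single i (int k)) :: 'a::comm_ring_1 lpoly)"
  by (induction k) (simp_all add: X_def monom_add[symmetric] single_add[symmetric] add.commute)

lemma Xinv_power: "Xinv i ^ k = (monom (Poly_Mapping.single i (- int k)) :: 'a::comm_ring_1 lpoly)"
  by (induction k) (simp_all add: Xinv_def monom_add[symmetric] single_add[symmetric] add.commute)

lemma Xinv_times_X: "Xinv i * X i = (1 :: 'a::comm_ring_1 lpoly)"
  by (simp add: Xinv_def X_def monom_add[symmetric] single_add[symmetric])

lemma X_times_cancel:
  assumes "X i * p = X i * (q :: 'a::comm_ring_1 lpoly)"
  shows "p = q"
proof -
  have "Xinv i * (X i * p) = Xinv i * (X i * q)"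
    using assms by simp
  then show ?thesis
    by (simp add: mult.assoc[symmetric] Xinv_times_X)
qed

lemma monom_eq_prod_X_power:
  assumes "finite I" "Poly_Mapping.keys m \<subseteq> I" "\<forall>i. Poly_Mapping.lookup m i \<ge> 0"
  shows "monom m = (\<Prod>i\<in>I. X i ^ nat (Poly_Mapping.lookup m i) :: 'a::comm_ring_1 lpoly)"
proof -
  have "m = (\<Sum>i\<in>I. Poly_Mapping.single i (int (nat (Poly_Mapping.lookup m i))))"
    using assms by (intro poly_mapping_eqI)
      (auto simp: lookup_sum lookup_single when_def in_keys_iff sum.delta' simp del: of_nat_nat)
  then show ?thesis
    by (simp add: X_power monom_sum[symmetric])
qed

lemma ring_gen_zero: "0 \<in> ring_gen G"
  using ring_gen.const[of 0 G] by simp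

lemma ring_gen_one: "1 \<in> ring_gen G"
  using ring_gen.const[of 1 G] by simp

lemma ring_gen_power: "p \<in> ring_gen G \<Longrightarrow> p ^ k \<in> ring_gen G"
  by (induction k) (simp_all add: ring_gen_one ring_gen.mult)

lemma ring_gen_prod: "(\<And>i. i \<in> I \<Longrightarrow> f i \<in> ring_gen G) \<Longrightarrow> (\<Prod>i\<in>I. f i) \<in> ring_gen G"
  by (induction I rule: infinite_finite_induct) (simp_all add: ring_gen_one ring_gen.mult)

lemma ring_gen_sum: "(\<And>i. i \<in> I \<Longrightarrow> f i \<in> ring_gen G) \<Longrightarrow> (\<Sum>i\<in>I. f i) \<in> ring_gen G"
  by (induction I rule: infinite_finite_induct) (simp_all add: ring_gen_zero ring_gen.add)

lemma ring_gen_minimal: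
  assumes "G \<subseteq> ring_gen G'"
  shows "ring_gen G \<subseteq> ring_gen G'"
proof
  fix p assume "p \<in> ring_gen G"
  then show "p \<in> ring_gen G'"
    by induction (use assms in \<open>auto intro: ring_gen.intros\<close>)
qed

lemma polyring_subset_ring_gen:
  assumes "\<And>i. i \<in> {1..n} \<Longrightarrow> X i \<in> ring_gen G"
  shows "polyring n \<subseteq> ring_gen G"
proof
  fix P :: "'a::comm_ring_1 lpoly" assume P: "P \<in> polyring n"
  have "monom m \<in> ring_gen G" if "m \<in> Poly_Mapping.keys P" for m
  proof -
    have "Poly_Mapping.keys m \<subseteq> {1..n}" "\<forall>i. Poly_Mapping.lookup m i \<ge> 0"
      using P that unfolding polyring_def in_vars_def by auto
    then have "monom m = (\<Prod>i\<in>{1..n}. X i ^ nat (Poly_Mapping.lookup m i) :: 'a lpoly)"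
      by (intro monom_eq_prod_X_power) auto
    then show ?thesis
      using assms by (auto intro!: ring_gen_prod ring_gen_power)
  qed
  then have "(\<Sum>m\<in>Poly_Mapping.keys P. const (Poly_Mapping.lookup P m) * monom m) \<in> ring_gen G"
    by (intro ring_gen_sum ring_gen.mult ring_gen.const)
  then show "P \<in> ring_gen G"
    by (subst poly_mapping_sum_singles) (simp add: single_eq_const_times_monom)
qed

lemma ring_gen_insert_Xinv_clear:
  assumes "y \<in> ring_gen (insert (Xinv i) G)" "X i \<in> ring_gen G"
  shows "\<exists>N. X i ^ N * y \<in> ring_gen G"
  using assms(1)
proof induction
  case (const c)
  have "X i ^ 0 * const c \<in> ring_gen G"
    by (simp add: ring_gen.const)
  then show ?case ..
next
  case (gen g)
  show ?case
  proof (cases "g = Xinv i")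
    case True
    then have "X i ^ 1 * g = 1"
      using Xinv_times_X[of i] by (simp add: mult.commute)
    then have "X i ^ 1 * g \<in> ring_gen G"
      using ring_gen_one by metis
    then show ?thesis ..
  next
    case False
    then have "X i ^ 0 * g \<in> ring_gen G"
      using gen by (simp add: ring_gen.gen)
    then show ?thesis ..
  qed
next
  case (add p q)
  obtain N1 N2 where "X i ^ N1 * p \<in> ring_gen G" "X i ^ N2 * q \<in> ring_gen G"
    using add.IH by blast
  then have "X i ^ N2 * (X i ^ N1 * p) + X i ^ N1 * (X i ^ N2 * q) \<in> ring_gen G"
    using ring_gen_power[OF assms(2)] by (blast intro: ring_gen.add ring_gen.mult)
  then have "X i ^ (N1 + N2) * (p + q) \<in> ring_gen G"
    by (simp add: power_add algebra_simps)
  then show ?case ..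
next
  case (mult p q)
  obtain N1 N2 where "X i ^ N1 * p \<in> ring_gen G" "X i ^ N2 * q \<in> ring_gen G"
    using mult.IH by blast
  then have "(X i ^ N1 * p) * (X i ^ N2 * q) \<in> ring_gen G"
    by (rule ring_gen.mult)
  then have "X i ^ (N1 + N2) * (p * q) \<in> ring_gen G"
    by (simp add: power_add algebra_simps)
  then show ?case ..
next
  case (neg p)
  then obtain N where "X i ^ N * p \<in> ring_gen G"
    by blast
  then have "X i ^ N * - p \<in> ring_gen G"
    using ring_gen.neg by fastforce
  then show ?case ..
qed

section \<open>Lexicographic leading terms\<close>

lemma lex_less_irrefl: "\<not> lex_less n a a"
  unfolding lex_less_def by auto

lemma lex_less_trans:
  assumes "lex_less n a b" "lex_less n b c"
  shows "lex_less n a c"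
proof -
  obtain i where i: "i \<in> {1..n}" "\<forall>j\<in>{1..<i}. Poly_Mapping.lookup a j = Poly_Mapping.lookup b j"
      "Poly_Mapping.lookup a i < Poly_Mapping.lookup b i"
    using assms(1) unfolding lex_less_def by blast
  obtain k where k: "k \<in> {1..n}" "\<forall>j\<in>{1..<k}. Poly_Mapping.lookup b j = Poly_Mapping.lookup c j"
      "Poly_Mapping.lookup b k < Poly_Mapping.lookup c k"
    using assms(2) unfolding lex_less_def by blast
  show ?thesis
    unfolding lex_less_def
  proof (cases i k rule: linorder_cases)
    case greater
    then show "\<exists>i\<in>{1..n}. (\<forall>j\<in>{1..<i}. Poly_Mapping.lookup a j = Poly_Mapping.lookup c j) \<and>
        Poly_Mapping.lookup a i < Poly_Mapping.lookup c i"
      using i k by (intro bexI[of _ k]) auto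
  qed (use i k in \<open>intro bexI[of _ i]; auto\<close>)+
qed

lemma lex_less_asym: "lex_less n a b \<Longrightarrow> \<not> lex_less n b a"
  using lex_less_trans lex_less_irrefl by blast

lemma lex_less_add_right: "lex_less n a b \<Longrightarrow> lex_less n (a + c) (b + c)"
  unfolding lex_less_def by (auto simp: lookup_add)

lemma lex_less_add_mono:
  assumes "lex_less n a b" "c = d \<or> lex_less n c d"
  shows "lex_less n (a + c) (b + d)"
proof (cases "c = d")
  case False
  then have "lex_less n (c + b) (d + b)"
    using assms(2) lex_less_add_right by blast
  then show ?thesis
    using lex_less_add_right[OF assms(1)] lex_less_trans by (metis add.commute)
qed (use lex_less_add_right[OF assms(1)] in simp)

lemma lex_less_total:
  assumes "in_vars n a" "in_vars n b" "a \<noteq> b"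
  shows "lex_less n a b \<or> lex_less n b a"
proof -
  have "\<exists>i. Poly_Mapping.lookup a i \<noteq> Poly_Mapping.lookup b i"
    using assms(3) by (meson poly_mapping_eqI)
  then obtain i where ne: "Poly_Mapping.lookup a i \<noteq> Poly_Mapping.lookup b i"
    and below: "\<And>j. j < i \<Longrightarrow> Poly_Mapping.lookup a j = Poly_Mapping.lookup b j"
    using exists_least_iff[of "\<lambda>i. Poly_Mapping.lookup a i \<noteq> Poly_Mapping.lookup b i"] by blast
  have "i \<in> Poly_Mapping.keys a \<union> Poly_Mapping.keys b"
    using ne by (auto simp: in_keys_iff)
  then have "i \<in> {1..n}"
    using assms(1,2) unfolding in_vars_def by blast
  moreover have "\<forall>j\<in>{1..<i}. Poly_Mapping.lookup a j = Poly_Mapping.lookup b j"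
    "\<forall>j\<in>{1..<i}. Poly_Mapping.lookup b j = Poly_Mapping.lookup a j"
    using below by simp_all
  ultimately show ?thesis
    using ne unfolding lex_less_def by (meson linorder_neqE)
qed

lemma exists_lex_least:
  assumes "finite S" "S \<noteq> {}" "\<forall>s\<in>S. in_vars n s"
  shows "\<exists>m\<in>S. \<forall>m'\<in>S. m' \<noteq> m \<longrightarrow> lex_less n m m'"
  using assms
proof (induction S rule: finite_ne_induct)
  case (insert x S)
  then obtain m where m: "m \<in> S" "\<forall>m'\<in>S. m' \<noteq> m \<longrightarrow> lex_less n m m'"
    by auto
  show ?case
  proof (cases "lex_less n x m")
    case True
    then show ?thesis
      using m lex_less_trans by (intro bexI[of _ x]) auto
  next
    case False
    then have "lex_less n m x"
      using lex_less_total insert m(1) by blast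
    then show ?thesis
      using m by (intro bexI[of _ m]) auto
  qed
qed simp

definition has_lex_lead :: "nat \<Rightarrow> 'a::zero lpoly \<Rightarrow> (nat \<Rightarrow>\<^sub>0 int) \<Rightarrow> 'a \<Rightarrow> bool" where
  "has_lex_lead n p e c \<longleftrightarrow>
     Poly_Mapping.lookup p e = c \<and> c \<noteq> 0 \<and> (\<forall>m\<in>Poly_Mapping.keys p. m \<noteq> e \<longrightarrow> lex_less n e m)"

lemma lex_first_exp_lead:
  assumes "P \<in> polyring n" "P \<noteq> 0"
  shows "has_lex_lead n P (lex_first_exp n P) (Poly_Mapping.lookup P (lex_first_exp n P))"
proof -
  have "\<forall>s\<in>Poly_Mapping.keys P. in_vars n s"
    using assms(1) unfolding polyring_def by blast
  moreover have "Poly_Mapping.keys P \<noteq> {}"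
    using assms(2) by simp
  ultimately obtain m where m: "m \<in> Poly_Mapping.keys P"
      "\<forall>m'\<in>Poly_Mapping.keys P. m' \<noteq> m \<longrightarrow> lex_less n m m'"
    using exists_lex_least[of "Poly_Mapping.keys P" n] by auto
  have uniq: "m' = m" if "m' \<in> Poly_Mapping.keys P \<and>
      (\<forall>m''\<in>Poly_Mapping.keys P. m'' \<noteq> m' \<longrightarrow> lex_less n m' m'')" for m'
  proof (rule ccontr)
    assume "m' \<noteq> m"
    then have "lex_less n m' m" "lex_less n m m'"
      using that m by auto
    then show False
      using lex_less_asym by blast
  qed
  have "lex_first_exp n P = m"
    unfolding lex_first_exp_def
  proof (rule the_equality)
    show "m \<in> Poly_Mapping.keys P \<and> (\<forall>m'\<in>Poly_Mapping.keys P. m' \<noteq> m \<longrightarrow> lex_less n m m')"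
      using m by simp
  qed (fact uniq)
  moreover have "Poly_Mapping.lookup P m \<noteq> 0"
    using m(1) by (simp add: in_keys_iff)
  ultimately show ?thesis
    using m(2) unfolding has_lex_lead_def by simp
qed

lemma has_lex_lead_lookup_below:
  assumes "has_lex_lead n p e c" "lex_less n m e"
  shows "Poly_Mapping.lookup p m = 0"
proof (rule ccontr)
  assume "Poly_Mapping.lookup p m \<noteq> 0"
  moreover have "m \<noteq> e"
    using assms(2) lex_less_irrefl by blast
  ultimately have "lex_less n e m"
    using assms(1) unfolding has_lex_lead_def by (simp add: in_keys_iff)
  then show False
    using assms(2) lex_less_asym by blast
qed

lemma lex_less_add_keys:
  assumes "has_lex_lead n p e a" "has_lex_lead n q f b"
    and "e' \<in> Poly_Mapping.keys p" "f' \<in> Poly_Mapping.keys q" "(e', f') \<noteq> (e, f)"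
  shows "lex_less n (e + f) (e' + f')"
proof (cases "e' = e")
  case True
  then have "lex_less n (f + e) (f' + e)"
    using assms lex_less_add_right unfolding has_lex_lead_def by blast
  then show ?thesis
    using True by (simp add: add.commute)
next
  case False
  then show ?thesis
    using assms by (intro lex_less_add_mono) (auto simp: has_lex_lead_def)
qed

lemma has_lex_lead_mult:
  fixes p q :: "'a::comm_ring_1 lpoly"
  assumes p: "has_lex_lead n p e a" and q: "has_lex_lead n q f b" and "a * b \<noteq> 0"
  shows "has_lex_lead n (p * q) (e + f) (a * b)"
proof -
  note lex_less = lex_less_add_keys[OF p q]
  have keys: "e \<in> Poly_Mapping.keys p" "f \<in> Poly_Mapping.keys q"
    using p q unfolding has_lex_lead_def by (auto simp: in_keys_iff)
  have "Poly_Mapping.lookup (p * q) (e + f) =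
    (\<Sum>e'\<in>Poly_Mapping.keys p. \<Sum>f'\<in>Poly_Mapping.keys q.
       if e' = e \<and> f' = f then Poly_Mapping.lookup p e' * Poly_Mapping.lookup q f' else 0)"
    unfolding lookup_times_keys
    apply (intro sum.cong refl)
    subgoal for e' f'
      using lex_less[of e' f'] lex_less_irrefl[of n "e + f"] by auto
    done
  also have "\<dots> = Poly_Mapping.lookup p e * Poly_Mapping.lookup q f"
  proof -
    have "(\<Sum>f'\<in>Poly_Mapping.keys q. if e' = e \<and> f' = f
        then Poly_Mapping.lookup p e' * Poly_Mapping.lookup q f' else 0) =
      (if e' = e then Poly_Mapping.lookup p e * Poly_Mapping.lookup q f else 0)" for e'
      using keys(2) by (auto simp: sum.delta')
    then show ?thesis
      using keys(1) by (simp add: sum.delta')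
  qed
  finally have "Poly_Mapping.lookup (p * q) (e + f) = a * b"
    using p q unfolding has_lex_lead_def by simp
  moreover have "lex_less n (e + f) m" if m: "m \<in> Poly_Mapping.keys (p * q)" "m \<noteq> e + f" for m
  proof -
    obtain e' f' where "m = e' + f'" "e' \<in> Poly_Mapping.keys p" "f' \<in> Poly_Mapping.keys q"
      using keys_mult[of p q] m(1) by blast
    then show ?thesis
      using lex_less m(2) by auto
  qed
  ultimately show ?thesis
    using assms(3) unfolding has_lex_lead_def by simp
qed

lemma has_lex_lead_single: "c \<noteq> 0 \<Longrightarrow> has_lex_lead n (Poly_Mapping.single e c) e c"
  unfolding has_lex_lead_def by auto

lemma has_lex_lead_one: "has_lex_lead n (1 :: 'a::comm_ring_1 lpoly) 0 1"
  unfolding has_lex_lead_def by (auto simp: lookup_one)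

lemma has_lex_lead_power:
  fixes p :: "'a::comm_ring_1 lpoly"
  assumes "has_lex_lead n p e 1"
  shows "has_lex_lead n (p ^ k) (\<Sum>t<k. e) 1"
proof (induction k)
  case (Suc k)
  have "has_lex_lead n (p * p ^ k) (e + (\<Sum>t<k. e)) (1 * 1)"
    by (rule has_lex_lead_mult[OF assms Suc]) simp
  moreover have "(\<Sum>t<Suc k. e) = e + (\<Sum>t<k. e)"
    by (simp only: sum.lessThan_Suc add.commute)
  ultimately show ?case
    by (simp only: power_Suc mult_1)
qed (simp only: power_0 lessThan_0 sum.empty has_lex_lead_one)

lemma has_lex_lead_prod:
  fixes f :: "nat \<Rightarrow> 'a::comm_ring_1 lpoly"
  assumes "finite I" "\<And>i. i \<in> I \<Longrightarrow> has_lex_lead n (f i) (e i) 1"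
  shows "has_lex_lead n (\<Prod>i\<in>I. f i) (\<Sum>i\<in>I. e i) 1"
  using assms
proof (induction I rule: finite_induct)
  case (insert x I)
  have "has_lex_lead n (f x * (\<Prod>i\<in>I. f i)) (e x + (\<Sum>i\<in>I. e i)) (1 * 1)"
    using insert.IH insert.prems by (intro has_lex_lead_mult) auto
  then show ?case
    by (simp only: prod.insert[OF insert.hyps] sum.insert[OF insert.hyps] mult_1)
qed (simp add: has_lex_lead_one)

lemma exists_key_sum_distinct_leads:
  fixes f :: "'k \<Rightarrow> 'a::comm_ring_1 lpoly"
  assumes "finite K" "K \<noteq> {}" "inj_on E K"
    and "\<And>k. k \<in> K \<Longrightarrow> has_lex_lead n (f k) (E k) 1"
    and "\<And>k. k \<in> K \<Longrightarrow> in_vars n (E k)"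
    and "\<And>k. k \<in> K \<Longrightarrow> r k \<noteq> 0"
  shows "\<exists>k\<in>K. E k \<in> Poly_Mapping.keys (\<Sum>k\<in>K. const (r k) * f k)"
proof -
  obtain k0 where k0: "k0 \<in> K" "\<forall>k\<in>K. k \<noteq> k0 \<longrightarrow> lex_less n (E k0) (E k)"
    using exists_lex_least[of "E ` K" n] assms(1-3,5) by (auto simp: inj_on_eq_iff)
  have "Poly_Mapping.lookup (const (r k) * f k) (E k0) = (if k = k0 then r k0 else 0)" if "k \<in> K" for k
    using that k0 assms(4) has_lex_lead_lookup_below[OF assms(4)]
    by (auto simp: lookup_const_times has_lex_lead_def)
  then have "Poly_Mapping.lookup (\<Sum>k\<in>K. const (r k) * f k) (E k0) = r k0"
    using k0(1) assms(1) by (simp add: lookup_sum cong: sum.cong)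
  then have "E k0 \<in> Poly_Mapping.keys (\<Sum>k\<in>K. const (r k) * f k)"
    using assms(6)[OF k0(1)] by (simp add: in_keys_iff)
  then show ?thesis
    using k0(1) by blast
qed

definition x1_nonneg :: "'a::zero lpoly \<Rightarrow> bool" where
  "x1_nonneg p \<longleftrightarrow> (\<forall>m\<in>Poly_Mapping.keys p. Poly_Mapping.lookup m 1 \<ge> 0)"

lemma x1_nonneg_mult:
  assumes "x1_nonneg p" "x1_nonneg q"
  shows "x1_nonneg (p * q :: 'a::comm_ring_1 lpoly)"
  unfolding x1_nonneg_def
proof
  fix m assume "m \<in> Poly_Mapping.keys (p * q)"
  then obtain a b where "m = a + b" "a \<in> Poly_Mapping.keys p" "b \<in> Poly_Mapping.keys q"
    using keys_mult[of p q] by blast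
  then show "0 \<le> Poly_Mapping.lookup m 1"
    using assms unfolding x1_nonneg_def by (simp add: lookup_add)
qed

lemma x1_nonneg_ring_gen:
  assumes "\<And>g. g \<in> G \<Longrightarrow> x1_nonneg g" "p \<in> ring_gen G"
  shows "x1_nonneg p"
  using assms(2)
proof induction
  case (add p q)
  then show ?case
    unfolding x1_nonneg_def using keys_add[of p q] by blast
next
  case (mult p q)
  from mult.IH show ?case
    by (rule x1_nonneg_mult)
qed (use assms(1) in \<open>auto simp: x1_nonneg_def const_def\<close>)

lemma x1_nonneg_X: "x1_nonneg (X i :: 'a::comm_ring_1 lpoly)"
  by (simp add: x1_nonneg_def X_def monom_def)

lemma x1_nonneg_Xinv: "i \<noteq> 1 \<Longrightarrow> x1_nonneg (Xinv i :: 'a::comm_ring_1 lpoly)"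
  by (simp add: x1_nonneg_def Xinv_def monom_def lookup_single)

lemma x1_nonneg_polyring: "P \<in> polyring n \<Longrightarrow> x1_nonneg P"
  unfolding x1_nonneg_def polyring_def by auto

lemma keys_X1_times:
  assumes "x1_nonneg (p :: 'a::comm_ring_1 lpoly)" "m \<in> Poly_Mapping.keys (X 1 * p)"
  shows "1 \<le> Poly_Mapping.lookup m 1"
proof -
  obtain a b where "m = a + b" "a \<in> Poly_Mapping.keys (X 1 :: 'a lpoly)" "b \<in> Poly_Mapping.keys p"
    using keys_mult assms(2) by blast
  then show ?thesis
    using assms(1) unfolding x1_nonneg_def by (auto simp: X_def monom_def lookup_add)
qed

section \<open>Reduction modulo \<open>x\<^sub>1\<close> in the exchange ring\<close>

text \<open>\<open>F i * Xinv i\<close> plays the role of \<open>x'\<^sub>i\<close> (Condition 1.2(i) gives \<open>\<hat>F\<^sub>i = F\<^sub>i\<close>), and \<open>v i\<close>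
  is the exponent of the lexicographically first monomial of \<open>F\<^sub>i\<close>.\<close>

locale triangular_exchange =
  fixes n :: nat and F :: "nat \<Rightarrow> 'a::comm_ring_1 lpoly" and v :: "nat \<Rightarrow> (nat \<Rightarrow>\<^sub>0 int)"
  assumes F_polyring: "\<And>i. i \<in> {2..n} \<Longrightarrow> F i \<in> polyring n"
    and F_lead: "\<And>i. i \<in> {2..n} \<Longrightarrow> has_lex_lead n (F i) (v i) 1"
    and lead_exp_vanishes: "\<And>i j. i \<in> {2..n} \<Longrightarrow> j \<in> {1..i} \<Longrightarrow> Poly_Mapping.lookup (v i) j = 0"
begin

definition exch_gens :: "'a lpoly set" where
  "exch_gens = {X 1} \<union> (\<Union>i\<in>{2..n}. {X i, F i * Xinv i})"

abbreviation exch_ring :: "'a lpoly set" where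
  "exch_ring \<equiv> ring_gen exch_gens"

definition mixed_monom :: "(nat \<Rightarrow> nat) \<Rightarrow> (nat \<Rightarrow> nat) \<Rightarrow> 'a lpoly" where
  "mixed_monom c d = (\<Prod>i\<in>{2..n}. X i ^ c i * (F i * Xinv i) ^ d i)"

definition lead_exp :: "(nat \<Rightarrow> nat) \<Rightarrow> (nat \<Rightarrow> nat) \<Rightarrow> (nat \<Rightarrow>\<^sub>0 int)" where
  "lead_exp c d = (\<Sum>i\<in>{2..n}. Poly_Mapping.single i (int (c i) - int (d i)) + (\<Sum>t<d i. v i))"

definition reduced_pairs :: "((nat \<Rightarrow> nat) \<times> (nat \<Rightarrow> nat)) set" where
  "reduced_pairs = {(c, d). (\<forall>i. c i = 0 \<or> d i = 0) \<and> (\<forall>i. i \<notin> {2..n} \<longrightarrow> c i = 0 \<and> d i = 0)}"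

lemma X_in_exch_ring:
  assumes "i \<in> {1..n}"
  shows "X i \<in> exch_ring"
proof (rule ring_gen.gen)
  show "X i \<in> exch_gens"
  proof (cases "i = 1")
    case False
    then have "i \<in> {2..n}"
      using assms by auto
    then show ?thesis
      unfolding exch_gens_def by blast
  qed (simp add: exch_gens_def)
qed

lemma Y_in_exch_ring: "i \<in> {2..n} \<Longrightarrow> F i * Xinv i \<in> exch_ring"
  by (rule ring_gen.gen) (auto simp: exch_gens_def)

lemma X1_in_exch_ring: "X 1 \<in> exch_ring"
  by (rule ring_gen.gen) (simp add: exch_gens_def)

lemma X_times_Y: "X i * (F i * Xinv i) = F i"
proof -
  have "X i * (F i * Xinv i) = F i * (Xinv i * X i)"
    by (simp add: mult_ac)
  then show ?thesis
    by (simp add: Xinv_times_X)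
qed

lemma mixed_monom_in_exch_ring: "mixed_monom c d \<in> exch_ring"
  unfolding mixed_monom_def
  by (intro ring_gen_prod ring_gen.mult ring_gen_power X_in_exch_ring Y_in_exch_ring) auto

lemma mixed_monom_mult:
  "mixed_monom c d * mixed_monom c' d' = mixed_monom (\<lambda>i. c i + c' i) (\<lambda>i. d i + d' i)"
  unfolding mixed_monom_def prod.distrib[symmetric] by (simp add: power_add mult_ac)

lemma mixed_monom_zero: "mixed_monom (\<lambda>_. 0) (\<lambda>_. 0) = 1"
  unfolding mixed_monom_def by simp

lemma mixed_monom_cong:
  "(\<And>i. i \<in> {2..n} \<Longrightarrow> c i = c' i \<and> d i = d' i) \<Longrightarrow> mixed_monom c d = mixed_monom c' d'"
  unfolding mixed_monom_def by (intro prod.cong) auto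

lemma mixed_monom_X: "i \<in> {2..n} \<Longrightarrow> mixed_monom (\<lambda>j. if j = i then 1 else 0) (\<lambda>_. 0) = X i"
  unfolding mixed_monom_def by (simp add: prod.delta' if_distrib[where f = "\<lambda>k. X _ ^ k"] cong: if_cong)

lemma mixed_monom_Y: "i \<in> {2..n} \<Longrightarrow> mixed_monom (\<lambda>_. 0) (\<lambda>j. if j = i then 1 else 0) = F i * Xinv i"
  unfolding mixed_monom_def by (simp add: prod.delta' if_distrib[where f = "\<lambda>k. _ ^ k"] cong: if_cong)

lemma mixed_monom_exchange:
  assumes i: "i \<in> {2..n}" and "c i > 0" "d i > 0"
  shows "mixed_monom c d = F i * mixed_monom (c(i := c i - 1)) (d(i := d i - 1))"
proof -
  obtain c' d' where cd: "c i = Suc c'" "d i = Suc d'"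
    using assms(2,3) by (metis gr0_implies_Suc)
  have "X i ^ c i * (F i * Xinv i) ^ d i = X i * (F i * Xinv i) * (X i ^ c' * (F i * Xinv i) ^ d')"
    by (simp add: cd mult_ac)
  then have "X i ^ c i * (F i * Xinv i) ^ d i = F i * (X i ^ c' * (F i * Xinv i) ^ d')"
    by (simp only: X_times_Y)
  moreover have "mixed_monom c d = X i ^ c i * (F i * Xinv i) ^ d i *
      (\<Prod>j\<in>{2..n} - {i}. X j ^ c j * (F j * Xinv j) ^ d j)"
    unfolding mixed_monom_def using i by (simp add: prod.remove)
  moreover have "mixed_monom (c(i := c i - 1)) (d(i := d i - 1)) = X i ^ c' * (F i * Xinv i) ^ d' *
      (\<Prod>j\<in>{2..n} - {i}. X j ^ c j * (F j * Xinv j) ^ d j)"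
    unfolding mixed_monom_def using i by (simp add: prod.remove cd)
  ultimately show ?thesis
    by (simp add: mult.assoc)
qed

lemma monom_times_mixed_monom:
  assumes "Poly_Mapping.keys m \<subseteq> {1..n}" "\<forall>i. Poly_Mapping.lookup m i \<ge> 0"
  shows "monom m * mixed_monom c d =
    X 1 ^ nat (Poly_Mapping.lookup m 1) * mixed_monom (\<lambda>i. nat (Poly_Mapping.lookup m i) + c i) d"
proof -
  have "monom m = (\<Prod>j\<in>insert 1 {2..n}. X j ^ nat (Poly_Mapping.lookup m j) :: 'a lpoly)"
    using assms by (intro monom_eq_prod_X_power) auto
  also have "\<dots> = X 1 ^ nat (Poly_Mapping.lookup m 1) * mixed_monom (\<lambda>j. nat (Poly_Mapping.lookup m j)) (\<lambda>_. 0)"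
    by (simp add: mixed_monom_def)
  finally show ?thesis
    by (simp add: mult.assoc mixed_monom_mult)
qed

lemma v_in_vars: "i \<in> {2..n} \<Longrightarrow> in_vars n (v i)"
  using F_lead F_polyring unfolding has_lex_lead_def polyring_def by (fastforce simp: in_keys_iff)

lemma mixed_monom_lead: "has_lex_lead n (mixed_monom c d) (lead_exp c d) 1"
  unfolding mixed_monom_def lead_exp_def
proof (rule has_lex_lead_prod)
  fix i assume i: "i \<in> {2..n}"
  have "X i ^ c i * (F i * Xinv i) ^ d i =
      Poly_Mapping.single (Poly_Mapping.single i (int (c i) - int (d i))) 1 * F i ^ d i"
    by (simp add: X_power Xinv_power power_mult_distrib monom_def mult_single single_add[symmetric] mult_ac)
  also have "has_lex_lead n \<dots> (Poly_Mapping.single i (int (c i) - int (d i)) + (\<Sum>t<d i. v i)) (1 * 1)"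
    using i F_lead by (intro has_lex_lead_mult has_lex_lead_single has_lex_lead_power) auto
  finally show "has_lex_lead n (X i ^ c i * (F i * Xinv i) ^ d i)
      (Poly_Mapping.single i (int (c i) - int (d i)) + (\<Sum>t<d i. v i)) 1"
    by simp
qed simp

lemma lookup_lead_exp:
  "Poly_Mapping.lookup (lead_exp c d) j =
    (if j \<in> {2..n} then int (c j) - int (d j) else 0) + (\<Sum>i\<in>{2..n}. int (d i) * Poly_Mapping.lookup (v i) j)"
  unfolding lead_exp_def
  by (simp add: lookup_sum lookup_add lookup_single when_def sum.distrib del: sum_constant) simp

lemma lookup_lead_exp_1: "Poly_Mapping.lookup (lead_exp c d) 1 = 0"
  unfolding lookup_lead_exp using lead_exp_vanishes by simp

lemma lead_exp_in_vars: "in_vars n (lead_exp c d)"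
  unfolding in_vars_def
proof
  fix j assume "j \<in> Poly_Mapping.keys (lead_exp c d)"
  then have "Poly_Mapping.lookup (lead_exp c d) j \<noteq> 0"
    by (simp add: in_keys_iff)
  show "j \<in> {1..n}"
  proof (rule ccontr)
    assume j: "j \<notin> {1..n}"
    then have "Poly_Mapping.lookup (v i) j = 0" if "i \<in> {2..n}" for i
      using v_in_vars[OF that] unfolding in_vars_def by (auto simp: in_keys_iff)
    then have "Poly_Mapping.lookup (lead_exp c d) j = 0"
      using j unfolding lookup_lead_exp by auto
    then show False
      using \<open>Poly_Mapping.lookup (lead_exp c d) j \<noteq> 0\<close> by simp
  qed
qed

text \<open>As \<open>v j\<close> vanishes at \<open>x\<^sub>1, \<dots>, x\<^sub>j\<close>, the \<open>x\<^sub>i\<close>-entry of \<open>lead_exp c d\<close> is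
  \<open>c\<^sub>i - d\<^sub>i\<close> plus a term depending only on the \<open>d\<^sub>j\<close> with \<open>j < i\<close>.\<close>

lemma lead_exp_inj:
  assumes "(c, d) \<in> reduced_pairs" "(c', d') \<in> reduced_pairs" "lead_exp c d = lead_exp c' d'"
  shows "c = c' \<and> d = d'"
proof -
  have agree: "i \<in> {2..n} \<longrightarrow> c i = c' i \<and> d i = d' i" for i
  proof (induction i rule: less_induct)
    case (less i)
    show ?case
    proof
      assume i: "i \<in> {2..n}"
      have "(\<Sum>j\<in>{2..n}. int (d j) * Poly_Mapping.lookup (v j) i) =
          (\<Sum>j\<in>{2..n}. int (d' j) * Poly_Mapping.lookup (v j) i)"
      proof (rule sum.cong)
        fix j assume j: "j \<in> {2..n}"
        show "int (d j) * Poly_Mapping.lookup (v j) i = int (d' j) * Poly_Mapping.lookup (v j) i"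
        proof (cases "j < i")
          case False
          then have "i \<in> {1..j}"
            using i by auto
          then show ?thesis
            using lead_exp_vanishes[OF j] by simp
        qed (use less.IH j in simp)
      qed simp
      then have "int (c i) - int (d i) = int (c' i) - int (d' i)"
        using assms(3) arg_cong[OF assms(3), of "\<lambda>e. Poly_Mapping.lookup e i"] i
        unfolding lookup_lead_exp by simp
      moreover have "c i = 0 \<or> d i = 0" "c' i = 0 \<or> d' i = 0"
        using assms(1,2) unfolding reduced_pairs_def by auto
      ultimately show "c i = c' i \<and> d i = d' i"
        by linarith
    qed
  qed
  have "c i = c' i \<and> d i = d' i" for i
    using agree[of i] assms(1,2) unfolding reduced_pairs_def by (cases "i \<in> {2..n}") auto
  then show ?thesis
    by auto
qed

inductive_set reduced_span :: "'a lpoly set" where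
  zero: "0 \<in> reduced_span"
| scaled: "(c, d) \<in> reduced_pairs \<Longrightarrow> const r * mixed_monom c d \<in> reduced_span"
| add: "p \<in> reduced_span \<Longrightarrow> q \<in> reduced_span \<Longrightarrow> p + q \<in> reduced_span"

lemma reduced_span_sum_rep:
  assumes "w \<in> reduced_span"
  shows "\<exists>K r. finite K \<and> K \<subseteq> reduced_pairs \<and> w = (\<Sum>k\<in>K. const (r k) * mixed_monom (fst k) (snd k))"
  using assms
proof induction
  case zero
  show ?case
    by (intro exI[of _ "{}"]) simp
next
  case (scaled c d r)
  show ?case
    using scaled by (intro exI[of _ "{(c, d)}"] exI[of _ "\<lambda>_. r"]) simp
next
  case (add p q)
  obtain K1 r1 where 1: "finite K1" "K1 \<subseteq> reduced_pairs"
      "p = (\<Sum>k\<in>K1. const (r1 k) * mixed_monom (fst k) (snd k))"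
    using add.IH(1) by blast
  obtain K2 r2 where 2: "finite K2" "K2 \<subseteq> reduced_pairs"
      "q = (\<Sum>k\<in>K2. const (r2 k) * mixed_monom (fst k) (snd k))"
    using add.IH(2) by blast
  define r where "r k = (if k \<in> K1 then r1 k else 0) + (if k \<in> K2 then r2 k else 0)" for k
  have fin: "finite (K1 \<union> K2)"
    using 1 2 by simp
  have "(\<Sum>k\<in>K1 \<union> K2. const (r k) * mixed_monom (fst k) (snd k)) =
     (\<Sum>k\<in>K1 \<union> K2. (if k \<in> K1 then const (r1 k) * mixed_monom (fst k) (snd k) else 0)) +
     (\<Sum>k\<in>K1 \<union> K2. (if k \<in> K2 then const (r2 k) * mixed_monom (fst k) (snd k) else 0))"
    unfolding sum.distrib[symmetric]
    by (intro sum.cong refl) (simp add: r_def const_add distrib_right)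
  also have "\<dots> = p + q"
    unfolding sum.inter_restrict[OF fin, symmetric] 1(3) 2(3) by (simp add: Int_absorb1)
  finally show ?case
    using 1 2 by (intro exI[of _ "K1 \<union> K2"] exI[of _ r]) auto
qed

text \<open>The lexicographically least leading exponent of the reduced monomials in \<open>w\<close>
  survives in \<open>w\<close>, and it does not involve \<open>x\<^sub>1\<close>.\<close>

lemma reduced_span_eq_zero:
  assumes w: "w \<in> reduced_span" and x1: "\<forall>m\<in>Poly_Mapping.keys w. 1 \<le> Poly_Mapping.lookup m 1"
  shows "w = 0"
proof (rule ccontr)
  assume "w \<noteq> 0"
  obtain K r where K: "finite K" "K \<subseteq> reduced_pairs"
      "w = (\<Sum>k\<in>K. const (r k) * mixed_monom (fst k) (snd k))"
    using reduced_span_sum_rep[OF w] by blast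
  define K' where "K' = {k\<in>K. r k \<noteq> 0}"
  have K': "finite K'" "K' \<subseteq> reduced_pairs"
    using K(1,2) unfolding K'_def by auto
  have w': "w = (\<Sum>k\<in>K'. const (r k) * mixed_monom (fst k) (snd k))"
    unfolding K(3) K'_def using K(1) by (intro sum.mono_neutral_right) auto
  have "inj_on (\<lambda>k. lead_exp (fst k) (snd k)) K'"
  proof (rule inj_onI)
    fix k k' assume "k \<in> K'" "k' \<in> K'" "lead_exp (fst k) (snd k) = lead_exp (fst k') (snd k')"
    then have "fst k = fst k' \<and> snd k = snd k'"
      using K'(2) by (intro lead_exp_inj) auto
    then show "k = k'"
      by (simp add: prod_eq_iff)
  qed
  moreover have "K' \<noteq> {}"
    using \<open>w \<noteq> 0\<close> w' by auto
  ultimately have "\<exists>k\<in>K'. lead_exp (fst k) (snd k) \<in> Poly_Mapping.keys w"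
    unfolding w' using K'(1) mixed_monom_lead lead_exp_in_vars
    by (intro exists_key_sum_distinct_leads) (auto simp: K'_def)
  then show False
    using x1 lookup_lead_exp_1 by fastforce
qed

lemma reduced_span_subset_exch_ring: "w \<in> reduced_span \<Longrightarrow> w \<in> exch_ring"
  by (induction rule: reduced_span.induct)
     (auto intro: ring_gen_zero ring_gen.add ring_gen.mult ring_gen.const mixed_monom_in_exch_ring)

lemma reduced_span_uminus: "w \<in> reduced_span \<Longrightarrow> - w \<in> reduced_span"
proof (induction rule: reduced_span.induct)
  case (scaled c d r)
  then show ?case
    using reduced_span.scaled[OF scaled, of "- r"] by (simp add: const_uminus)
next
  case (add p q)
  have "- (p + q) = - p + - q"
    by simp
  then show ?case
    using reduced_span.add[OF add.IH] by (simp only:)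
qed (simp add: reduced_span.zero)

lemma reduced_span_const_times: "w \<in> reduced_span \<Longrightarrow> const a * w \<in> reduced_span"
proof (induction rule: reduced_span.induct)
  case (scaled c d r)
  then show ?case
    using reduced_span.scaled[OF scaled, of "a * r"] by (simp add: const_mult mult.assoc)
qed (auto simp: distrib_left intro: reduced_span.intros)

definition decomposable :: "'a lpoly set" where
  "decomposable = {X 1 * c + w | c w. c \<in> exch_ring \<and> w \<in> reduced_span}"

lemma decomposable_add: "p \<in> decomposable \<Longrightarrow> q \<in> decomposable \<Longrightarrow> p + q \<in> decomposable"
proof -
  assume "p \<in> decomposable" "q \<in> decomposable"
  then obtain c w c' w' where "c \<in> exch_ring" "w \<in> reduced_span" "p = X 1 * c + w"
      "c' \<in> exch_ring" "w' \<in> reduced_span" "q = X 1 * c' + w'"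
    unfolding decomposable_def by blast
  moreover have "p + q = X 1 * (c + c') + (w + w')"
    using calculation by (simp add: algebra_simps)
  ultimately show ?thesis
    unfolding decomposable_def by (blast intro: ring_gen.add reduced_span.add)
qed

lemma decomposable_uminus: "p \<in> decomposable \<Longrightarrow> - p \<in> decomposable"
proof -
  assume "p \<in> decomposable"
  then obtain c w where "c \<in> exch_ring" "w \<in> reduced_span" "p = X 1 * c + w"
    unfolding decomposable_def by blast
  moreover have "- p = X 1 * (- c) + (- w)"
    using calculation by (simp add: algebra_simps)
  ultimately show ?thesis
    unfolding decomposable_def by (blast intro: ring_gen.neg reduced_span_uminus)
qed

lemma decomposable_const_times: "p \<in> decomposable \<Longrightarrow> const a * p \<in> decomposable"
proof -
  assume "p \<in> decomposable"
  then obtain c w where "c \<in> exch_ring" "w \<in> reduced_span" "p = X 1 * c + w"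
    unfolding decomposable_def by blast
  moreover have "const a * p = X 1 * (const a * c) + const a * w"
    using calculation by (simp add: algebra_simps)
  ultimately show ?thesis
    unfolding decomposable_def by (blast intro: ring_gen.mult ring_gen.const reduced_span_const_times)
qed

lemma X1_times_decomposable: "c \<in> exch_ring \<Longrightarrow> X 1 * c \<in> decomposable"
  unfolding decomposable_def using reduced_span.zero by force

lemma reduced_span_subset_decomposable: "w \<in> reduced_span \<Longrightarrow> w \<in> decomposable"
  unfolding decomposable_def using ring_gen_zero by force

lemma decomposable_sum: "(\<And>i. i \<in> I \<Longrightarrow> f i \<in> decomposable) \<Longrightarrow> (\<Sum>i\<in>I. f i) \<in> decomposable"
  by (induction I rule: infinite_finite_induct)
     (simp_all add: decomposable_add reduced_span_subset_decomposable reduced_span.zero)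

lemma polyring_times_mixed_monom_decomposable:
  assumes "P \<in> polyring n" and "\<And>c. mixed_monom c d \<in> decomposable"
  shows "P * mixed_monom c d \<in> decomposable"
proof -
  have "P * mixed_monom c d =
      (\<Sum>m\<in>Poly_Mapping.keys P. const (Poly_Mapping.lookup P m) * (monom m * mixed_monom c d))"
    by (subst poly_mapping_sum_singles) (simp add: single_eq_const_times_monom sum_distrib_right mult.assoc)
  also have "\<dots> \<in> decomposable"
  proof (rule decomposable_sum)
    fix m assume "m \<in> Poly_Mapping.keys P"
    then have "Poly_Mapping.keys m \<subseteq> {1..n}" "\<forall>i. Poly_Mapping.lookup m i \<ge> 0"
      using assms(1) unfolding polyring_def in_vars_def by auto
    then have eq: "monom m * mixed_monom c d = X 1 ^ nat (Poly_Mapping.lookup m 1) *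
        mixed_monom (\<lambda>i. nat (Poly_Mapping.lookup m i) + c i) d"
      by (rule monom_times_mixed_monom)
    show "const (Poly_Mapping.lookup P m) * (monom m * mixed_monom c d) \<in> decomposable"
    proof (cases "nat (Poly_Mapping.lookup m 1)")
      case 0
      then show ?thesis
        using assms(2) by (simp add: eq decomposable_const_times)
    next
      case (Suc k)
      then have "const (Poly_Mapping.lookup P m) * (monom m * mixed_monom c d) =
          X 1 * (const (Poly_Mapping.lookup P m) * (X 1 ^ k * mixed_monom (\<lambda>i. nat (Poly_Mapping.lookup m i) + c i) d))"
        by (simp add: eq mult_ac)
      also have "\<dots> \<in> decomposable"
        by (intro X1_times_decomposable ring_gen.mult ring_gen.const ring_gen_power
            mixed_monom_in_exch_ring X1_in_exch_ring)
      finally show ?thesis .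
    qed
  qed
  finally show ?thesis .
qed

text \<open>Induction on the total degree in the \<open>x'\<^sub>i\<close>: \<open>x\<^sub>i x'\<^sub>i = F\<^sub>i\<close> lowers it, and the
  monomials of \<open>F\<^sub>i\<close> containing \<open>x\<^sub>1\<close> land in \<open>x\<^sub>1 C\<close>.\<close>

lemma mixed_monom_decomposable: "mixed_monom c d \<in> decomposable"
proof (induction "\<Sum>i\<in>{2..n}. d i" arbitrary: c d rule: less_induct)
  case less
  show ?case
  proof (cases "\<exists>i\<in>{2..n}. 0 < c i \<and> 0 < d i")
    case True
    then obtain i where i: "i \<in> {2..n}" "0 < c i" "0 < d i"
      by blast
    have "(\<Sum>j\<in>{2..n}. (d(i := d i - 1)) j) < (\<Sum>j\<in>{2..n}. d j)"
      using i by (intro sum_strict_mono_ex1) auto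
    then have "\<And>c'. mixed_monom c' (d(i := d i - 1)) \<in> decomposable"
      by (rule less.hyps)
    then have "F i * mixed_monom (c(i := c i - 1)) (d(i := d i - 1)) \<in> decomposable"
      by (rule polyring_times_mixed_monom_decomposable[OF F_polyring[OF i(1)]])
    then show ?thesis
      using mixed_monom_exchange[of i c d, OF i] by simp
  next
    case False
    define c' where "c' = (\<lambda>j. if j \<in> {2..n} then c j else 0)"
    define d' where "d' = (\<lambda>j. if j \<in> {2..n} then d j else 0)"
    have "(c', d') \<in> reduced_pairs"
      using False unfolding reduced_pairs_def c'_def d'_def by auto
    then have "const 1 * mixed_monom c' d' \<in> decomposable"
      by (intro reduced_span_subset_decomposable reduced_span.scaled)
    moreover have "mixed_monom c d = mixed_monom c' d'"
      by (rule mixed_monom_cong) (simp add: c'_def d'_def)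
    ultimately show ?thesis
      by simp
  qed
qed

lemma reduced_span_mult_decomposable:
  assumes "w \<in> reduced_span" "w' \<in> reduced_span"
  shows "w * w' \<in> decomposable"
  using assms
proof (induction w rule: reduced_span.induct)
  case (scaled c d r)
  from scaled(2) show ?case
  proof (induction w' rule: reduced_span.induct)
    case (scaled c' d' r')
    have "const r * mixed_monom c d * (const r' * mixed_monom c' d') =
        const (r * r') * mixed_monom (\<lambda>i. c i + c' i) (\<lambda>i. d i + d' i)"
      by (simp add: const_mult mixed_monom_mult[symmetric] mult_ac)
    then show ?case
      by (simp add: decomposable_const_times mixed_monom_decomposable)
  qed (simp_all add: distrib_left decomposable_add reduced_span_subset_decomposable reduced_span.zero)
qed (simp_all add: distrib_right decomposable_add reduced_span_subset_decomposable reduced_span.zero)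

lemma decomposable_mult:
  assumes "p \<in> decomposable" "q \<in> decomposable" "q \<in> exch_ring"
  shows "p * q \<in> decomposable"
proof -
  obtain c w where cw: "c \<in> exch_ring" "w \<in> reduced_span" "p = X 1 * c + w"
    using assms(1) unfolding decomposable_def by blast
  obtain c' w' where cw': "c' \<in> exch_ring" "w' \<in> reduced_span" "q = X 1 * c' + w'"
    using assms(2) unfolding decomposable_def by blast
  obtain c'' w'' where cw'': "c'' \<in> exch_ring" "w'' \<in> reduced_span" "w * w' = X 1 * c'' + w''"
    using reduced_span_mult_decomposable[OF cw(2) cw'(2)] unfolding decomposable_def by blast
  have "p * q = X 1 * (c * q + w * c' + c'') + w''"
    using cw cw' cw'' by (simp add: algebra_simps)
  moreover have "c * q + w * c' + c'' \<in> exch_ring"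
    using cw cw' cw'' assms(3) reduced_span_subset_exch_ring by (intro ring_gen.add ring_gen.mult) auto
  ultimately show ?thesis
    unfolding decomposable_def using cw''(2) by blast
qed

lemma exch_ring_decomposable: "p \<in> exch_ring \<Longrightarrow> p \<in> decomposable"
proof (induction rule: ring_gen.induct)
  case (const a)
  have "const a * mixed_monom (\<lambda>_. 0) (\<lambda>_. 0) \<in> decomposable"
    by (intro decomposable_const_times mixed_monom_decomposable)
  then show ?case
    by (simp add: mixed_monom_zero)
next
  case (gen g)
  then consider "g = X 1" | i where "i \<in> {2..n}" "g = X i" | i where "i \<in> {2..n}" "g = F i * Xinv i"
    unfolding exch_gens_def by blast
  then show ?case
  proof cases
    case 1
    then show ?thesis
      using X1_times_decomposable[OF ring_gen_one] by simp
  next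
    case (2 i)
    then show ?thesis
      using mixed_monom_decomposable mixed_monom_X by metis
  next
    case (3 i)
    then show ?thesis
      using mixed_monom_decomposable mixed_monom_Y by metis
  qed
next
  case (add p q)
  from add.IH show ?case
    by (rule decomposable_add)
next
  case (mult p q)
  from mult.IH mult.hyps(2) show ?case
    by (rule decomposable_mult)
next
  case (neg p)
  from neg.IH show ?case
    by (rule decomposable_uminus)
qed

lemma x1_nonneg_exch_ring: "p \<in> exch_ring \<Longrightarrow> x1_nonneg p"
proof (rule x1_nonneg_ring_gen)
  fix g assume "g \<in> exch_gens"
  moreover have "x1_nonneg (F i * Xinv i)" if "i \<in> {2..n}" for i
    using that by (intro x1_nonneg_mult x1_nonneg_polyring[OF F_polyring] x1_nonneg_Xinv) auto
  ultimately show "x1_nonneg g"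
    unfolding exch_gens_def by (auto simp: x1_nonneg_X)
qed

lemma exch_ring_divide_X1:
  assumes z: "z \<in> exch_ring" and x1: "\<forall>m\<in>Poly_Mapping.keys z. 1 \<le> Poly_Mapping.lookup m 1"
  shows "\<exists>c\<in>exch_ring. z = X 1 * c"
proof -
  obtain c w where cw: "c \<in> exch_ring" "w \<in> reduced_span" "z = X 1 * c + w"
    using exch_ring_decomposable[OF z] unfolding decomposable_def by blast
  have "x1_nonneg c"
    using cw(1) by (rule x1_nonneg_exch_ring)
  then have "\<forall>m\<in>Poly_Mapping.keys w. 1 \<le> Poly_Mapping.lookup m 1"
    using keys_diff[of z "X 1 * c"] x1 keys_X1_times[of c] cw(3) by (auto simp: algebra_simps)
  then have "w = 0"
    using reduced_span_eq_zero[OF cw(2)] by blast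
  then show ?thesis
    using cw by auto
qed

lemma exch_ring_cancel_X1_power:
  assumes "x1_nonneg y" "X 1 ^ N * y \<in> exch_ring"
  shows "y \<in> exch_ring"
  using assms
proof (induction N arbitrary: y)
  case (Suc N)
  have "x1_nonneg (X 1 ^ N * y)"
    using Suc.prems(1) by (intro x1_nonneg_mult) (simp_all add: X_power x1_nonneg_def monom_def)
  then have "\<forall>m\<in>Poly_Mapping.keys (X 1 * (X 1 ^ N * y)). 1 \<le> Poly_Mapping.lookup m 1"
    using keys_X1_times by blast
  moreover have "X 1 * (X 1 ^ N * y) \<in> exch_ring"
    using Suc.prems(2) by (simp add: mult.assoc)
  ultimately obtain c where "c \<in> exch_ring" "X 1 * (X 1 ^ N * y) = X 1 * c"
    using exch_ring_divide_X1 by blast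
  moreover from this(2) have "X 1 ^ N * y = c"
    by (rule X_times_cancel)
  ultimately show ?case
    using Suc.IH Suc.prems(1) by blast
qed simp

lemma exch_ring_subset_laurent:
  "exch_ring \<subseteq> ring_gen ({X 1} \<union> (\<Union>i\<in>{2..n}. {X i, Xinv i}))"
  (is "_ \<subseteq> ring_gen ?A")
proof (rule ring_gen_minimal)
  have X_in_A: "X i \<in> ring_gen ?A" if "i = 1 \<or> i \<in> {2..n}" for i
    using that by (intro ring_gen.gen) blast
  have "X i \<in> ring_gen ?A" if "i \<in> {1..n}" for i
    using that by (intro X_in_A) auto
  then have polyring_A: "polyring n \<subseteq> ring_gen ?A"
    by (rule polyring_subset_ring_gen)
  show "exch_gens \<subseteq> ring_gen ?A"
  proof
    fix g assume "g \<in> exch_gens"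
    then consider "g = X 1" | i where "i \<in> {2..n}" "g = X i" | i where "i \<in> {2..n}" "g = F i * Xinv i"
      unfolding exch_gens_def by blast
    then show "g \<in> ring_gen ?A"
    proof cases
      case (3 i)
      have "F i \<in> ring_gen ?A"
        using polyring_A F_polyring[OF 3(1)] by blast
      moreover have "Xinv i \<in> ring_gen ?A"
        using 3(1) by (intro ring_gen.gen) blast
      ultimately show ?thesis
        unfolding 3(2) by (rule ring_gen.mult)
    qed (use X_in_A in auto)
  qed
qed

lemma laurent_intersection_eq_exch_ring:
  "ring_gen ({X 1} \<union> (\<Union>i\<in>{2..n}. {X i, Xinv i}))
     \<inter> ring_gen ({X 1, Xinv 1} \<union> (\<Union>i\<in>{2..n}. {X i, F i * Xinv i})) = exch_ring"
  (is "ring_gen ?A \<inter> ring_gen ?B = _")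
proof
  have B: "?B = insert (Xinv 1) exch_gens"
    unfolding exch_gens_def by blast
  have "x1_nonneg (Xinv i :: 'a lpoly)" if "i \<in> {2..n}" for i
    using that by (intro x1_nonneg_Xinv) auto
  then have A_x1_nonneg: "x1_nonneg g" if "g \<in> ?A" for g
    using that x1_nonneg_X by auto
  show "ring_gen ?A \<inter> ring_gen ?B \<subseteq> exch_ring"
  proof
    fix y assume y: "y \<in> ring_gen ?A \<inter> ring_gen ?B"
    then have "x1_nonneg y"
      using x1_nonneg_ring_gen[OF A_x1_nonneg] by blast
    moreover obtain N where "X 1 ^ N * y \<in> exch_ring"
      using y ring_gen_insert_Xinv_clear[OF _ X1_in_exch_ring] unfolding B by blast
    ultimately show "y \<in> exch_ring"
      by (rule exch_ring_cancel_X1_power)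
  qed
  have "exch_ring \<subseteq> ring_gen ?B"
    unfolding B by (intro ring_gen_minimal subsetI ring_gen.gen) blast
  then show "exch_ring \<subseteq> ring_gen ?A \<inter> ring_gen ?B"
    using exch_ring_subset_laurent by blast
qed

end

lemma condition_1_2_triangular_exchange:
  assumes "LP_seed n F" "condition_1_2 n F"
  shows "triangular_exchange n F (\<lambda>i. lex_first_exp n (F i))"
proof
  fix i assume i: "i \<in> {2..n}"
  then have F: "F i \<in> polyring n" "F i \<noteq> 0"
    using assms(1) unfolding LP_seed_def irreducible_in_def by auto
  have cond: "Poly_Mapping.lookup (F i) (lex_first_exp n (F i)) = 1"
    "\<forall>j\<in>{1..i}. Poly_Mapping.lookup (lex_first_exp n (F i)) j = 0"
    using assms(2) i unfolding condition_1_2_def by auto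
  show "F i \<in> polyring n"
    using F(1) .
  show "has_lex_lead n (F i) (lex_first_exp n (F i)) 1"
    using lex_first_exp_lead[OF F] cond(1) by simp
  show "Poly_Mapping.lookup (lex_first_exp n (F i)) j = 0" if "j \<in> {1..i}" for j
    using cond(2) that by blast
qed

lemma condition_1_2_xprime:
  assumes "condition_1_2 n F" "i \<in> {1..n}"
  shows "xprime n F i = F i * Xinv i"
  using assms unfolding condition_1_2_def xprime_def by simp

text \<open>Neither \<open>n \<ge> 2\<close> nor irreducibility nor parts (iii), (iv) of Condition 1.2 are needed.\<close>

theorem lemma4p20:
  fixes F :: "nat \<Rightarrow> 'a::{factorial_semiring, idom, ring_char_0} lpoly"
    and n :: nat
  assumes "n \<ge> 2"
    and "LP_seed n F"
    and "condition_1_2 n F"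
  shows "ring_gen ({X 1} \<union> (\<Union>i\<in>{2..n}. {X i, Xinv i}))
       \<inter> ring_gen ({X 1, Xinv 1} \<union> (\<Union>i\<in>{2..n}. {X i, xprime n F i}))
       = ring_gen ({X 1} \<union> (\<Union>i\<in>{2..n}. {X i, xprime n F i}))"
proof -
  interpret triangular_exchange n F "\<lambda>i. lex_first_exp n (F i)"
    using assms(2,3) by (rule condition_1_2_triangular_exchange)
  have "(\<Union>i\<in>{2..n}. {X i, xprime n F i}) = (\<Union>i\<in>{2..n}. {X i, F i * Xinv i})"
    using condition_1_2_xprime[OF assms(3)] by simp
  then show ?thesis
    using laurent_intersection_eq_exch_ring unfolding exch_gens_def by simp
qed

end
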